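(* Let $T=(V,E)$ be a tree on $n$ vertices, let $f=\{i,j\}$ be a pair of vertices with $d_{i,j}=d>1$, and let $B=E\cup\{f\}$. Then the eigenvalues of $\mathrm{Min4PC}_T[B,B]$ are $-2$ with multiplicity $n-3$, together with the three roots of the cubic polynomial $$g(x)=x^3-(2n-6)x^2-(nd^2-5d^2+2nd-2d+5n-9)x-2(d-1)^2(n-1).$$
   Context: $d_{i,j}$ is the distance in $T$ between vertices $i,j$; $\mathcal{V}_2$ is the set of 2-element subsets of $V$ (edges regarded as elements of $\mathcal{V}_2$). $\mathrm{Min4PC}_T$ is the $\binom n2\times\binom n2$ matrix indexed by $\mathcal{V}_2$ whose entry in row $\{i,j\}$, column $\{k,l\}$ is $\min\{d_{i,l}+d_{j,k},\ d_{i,k}+d_{j,l},\ d_{i,j}+d_{k,l}\}$. $M[B,B]$ denotes the principal submatrix with rows and columns indexed by $B$. *)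

theory Defs
  imports "Jordan_Normal_Form.Char_Poly"
begin

definition simple_graph :: "'a set \<Rightarrow> 'a set set \<Rightarrow> bool" where
  "simple_graph V E \<longleftrightarrow> finite V \<and> (\<forall>e\<in>E. \<exists>u v. u \<noteq> v \<and> u \<in> V \<and> v \<in> V \<and> e = {u, v})"

definition is_walk :: "'a set \<Rightarrow> 'a set set \<Rightarrow> 'a list \<Rightarrow> bool" where
  "is_walk V E vs \<longleftrightarrow> vs \<noteq> [] \<and> set vs \<subseteq> V \<and>
     (\<forall>k. Suc k < length vs \<longrightarrow> {vs ! k, vs ! Suc k} \<in> E)"

definition connected_graph :: "'a set \<Rightarrow> 'a set set \<Rightarrow> bool" where
  "connected_graph V E \<longleftrightarrow>
     (\<forall>u\<in>V. \<forall>v\<in>V. \<exists>vs. is_walk V E vs \<and> hd vs = u \<and> last vs = v)"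

definition acyclic_graph :: "'a set \<Rightarrow> 'a set set \<Rightarrow> bool" where
  "acyclic_graph V E \<longleftrightarrow>
     \<not> (\<exists>vs. length vs \<ge> 3 \<and> distinct vs \<and> is_walk V E vs \<and> {last vs, hd vs} \<in> E)"

definition is_tree :: "'a set \<Rightarrow> 'a set set \<Rightarrow> bool" where
  "is_tree V E \<longleftrightarrow> simple_graph V E \<and> V \<noteq> {} \<and> connected_graph V E \<and> acyclic_graph V E"

definition gdist :: "'a set \<Rightarrow> 'a set set \<Rightarrow> 'a \<Rightarrow> 'a \<Rightarrow> nat" where
  "gdist V E u v = (LEAST k. \<exists>vs. is_walk V E vs \<and> hd vs = u \<and> last vs = v \<and> length vs = Suc k)"

definition min4pc :: "'a set \<Rightarrow> 'a set set \<Rightarrow> 'a \<times> 'a \<Rightarrow> 'a \<times> 'a \<Rightarrow> real" where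
  "min4pc V E p q = (case p of (i, j) \<Rightarrow> case q of (k, l) \<Rightarrow>
      real (min (gdist V E i l + gdist V E j k)
           (min (gdist V E i k + gdist V E j l) (gdist V E i j + gdist V E k l))))"

text \<open>The principal submatrix Min4PC_T[B,B], rows/columns ordered by an enumeration ps of B
  (each element of B given as an ordered pair of its two vertices).\<close>
definition min4pc_sub :: "'a set \<Rightarrow> 'a set set \<Rightarrow> ('a \<times> 'a) list \<Rightarrow> real mat" where
  "min4pc_sub V E ps = mat (length ps) (length ps) (\<lambda>(r, c). min4pc V E (ps ! r) (ps ! c))"

definition enumerates :: "('a \<times> 'a) list \<Rightarrow> 'a set set \<Rightarrow> bool" where
  "enumerates ps B \<longleftrightarrow> distinct (map (\<lambda>(a, b). {a, b}) ps) \<and> set (map (\<lambda>(a, b). {a, b}) ps) = B"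

end

(* Two distinct edges of T have Min4PC entry 2: of the three sums in the minimum one is 1 + 1,
   and the other two are positive and even, since in a tree the parity of d(u, v) is that of
   d(x, u) + d(x, v) for any x. For an edge {a, b} and f = {i, j} the two crossing sums have the
   parity of d + 1 and are at least d - 1, so the entry is d - 1 for the d edges of the i-j path
   and d + 1 for the n - 1 - d other edges. Hence Min4PC_T[B,B] is 2(J - I) bordered by a single
   row and column. Adding 2I gives a matrix U W of rank 3, and the Sylvester identity
   t^3 det(t I_n - U W) = t^n det(t I_3 - W U) turns the characteristic polynomial into
   (x + 2)^(n - 3) times a 3 x 3 determinant, which is the cubic g. *)

theory Submission
  imports Defs
begin

section \<open>Sylvester's determinant identity and bordered matrices\<close>

lemma det_sylvester:
  fixes U W :: "'a :: field mat"
  assumes U: "U \<in> carrier_mat n k" and W: "W \<in> carrier_mat k n" and t: "t \<noteq> 0"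
  shows "t ^ k * det (t \<cdot>\<^sub>m 1\<^sub>m n - U * W) = t ^ n * det (t \<cdot>\<^sub>m 1\<^sub>m k - W * U)"
proof -
  \<comment> \<open>Both block factorizations of [[t I, U], [W, I]] compute its determinant.\<close>
  define M where "M = four_block_mat (t \<cdot>\<^sub>m 1\<^sub>m n) U W (1\<^sub>m k)"
  define C where "C = 1\<^sub>m k - (1 / t) \<cdot>\<^sub>m (W * U)"
  have UW: "t \<cdot>\<^sub>m 1\<^sub>m n - U * W \<in> carrier_mat n n" and C: "C \<in> carrier_mat k k"
    using U W unfolding C_def by auto
  have "M = four_block_mat (1\<^sub>m n) U (0\<^sub>m k n) (1\<^sub>m k) *
      four_block_mat (t \<cdot>\<^sub>m 1\<^sub>m n - U * W) (0\<^sub>m n k) W (1\<^sub>m k)"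
    unfolding M_def using U W UW
    by (subst mult_four_block_mat[OF one_carrier_mat U zero_carrier_mat one_carrier_mat
          UW zero_carrier_mat W one_carrier_mat]) (auto intro!: cong_four_block_mat)
  then have "det M = det (t \<cdot>\<^sub>m 1\<^sub>m n - U * W)"
    using U W UW
    by (simp add: det_mult[of _ "n + k"] det_four_block_mat_lower_left_zero[of _ n _ k]
        det_four_block_mat_upper_right_zero[of _ n _ k])
  moreover have "M = four_block_mat (t \<cdot>\<^sub>m 1\<^sub>m n) (0\<^sub>m n k) W C *
      four_block_mat (1\<^sub>m n) ((1 / t) \<cdot>\<^sub>m U) (0\<^sub>m k n) (1\<^sub>m k)"
    unfolding M_def using U W C t
    by (subst mult_four_block_mat[OF smult_carrier_mat[OF one_carrier_mat] zero_carrier_mat W C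
          one_carrier_mat smult_carrier_mat[OF U] zero_carrier_mat one_carrier_mat])
      (auto intro!: cong_four_block_mat simp: C_def)
  then have "det M = t ^ n * det C"
    using U W C
    by (simp add: det_mult[of _ "n + k"] det_four_block_mat_lower_left_zero[of _ n _ k]
        det_four_block_mat_upper_right_zero[of _ n _ k])
  moreover have "t \<cdot>\<^sub>m C = t \<cdot>\<^sub>m 1\<^sub>m k - W * U"
    using U W t unfolding C_def by (auto simp: right_diff_distrib)
  then have "t ^ k * det C = det (t \<cdot>\<^sub>m 1\<^sub>m k - W * U)"
    using C by (metis det_smult carrier_matD(2))
  ultimately show ?thesis by (metis mult.left_commute)
qed

lemma det_2x2:
  assumes "A \<in> carrier_mat 2 2"
  shows "det A = A $$ (0, 0) * A $$ (1, 1) - A $$ (0, 1) * A $$ (1, 0)"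
  using assms
  by (subst laplace_expansion_row[of _ 2 0])
    (auto simp: numeral_2_eq_2 lessThan_Suc cofactor_def det_def mat_delete_def insert_index_def)

lemma det_3x3:
  assumes A: "A \<in> carrier_mat 3 3"
  shows "det A = A $$ (0, 0) * (A $$ (1, 1) * A $$ (2, 2) - A $$ (1, 2) * A $$ (2, 1))
     - A $$ (0, 1) * (A $$ (1, 0) * A $$ (2, 2) - A $$ (1, 2) * A $$ (2, 0))
     + A $$ (0, 2) * (A $$ (1, 0) * A $$ (2, 1) - A $$ (1, 1) * A $$ (2, 0))"
  using A
  by (subst laplace_expansion_row[of _ 3 0])
    (auto simp: numeral_3_eq_3 lessThan_Suc cofactor_def det_2x2 mat_delete_def insert_index_def
      numeral_2_eq_2 algebra_simps)

lemma poly_eqI_except: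
  fixes p q :: "'a :: {idom, ring_char_0} poly"
  assumes "\<And>x. x \<noteq> a \<Longrightarrow> poly p x = poly q x"
  shows "p = q"
proof (rule ccontr)
  assume "p \<noteq> q"
  then have "finite {x. poly (p - q) x = 0}"
    by (intro poly_roots_finite) simp
  moreover have "- {a} \<subseteq> {x. poly (p - q) x = 0}"
    using assms by auto
  ultimately have "finite (- {a})"
    by (rule finite_subset[rotated])
  then show False
    using infinite_UNIV_char_0[where 'a = 'a] by simp
qed

lemma bordered_mat_factorization:
  fixes A :: "real mat" and c :: real
  assumes A: "A \<in> carrier_mat n n" and q: "q < n"
    and diag: "\<And>r. r < n \<Longrightarrow> A $$ (r, r) = 0"
    and border: "\<And>r. r < n \<Longrightarrow> A $$ (q, r) = A $$ (r, q)"
    and const: "\<And>r s. r < n \<Longrightarrow> s < n \<Longrightarrow> r \<noteq> s \<Longrightarrow> r \<noteq> q \<Longrightarrow> s \<noteq> q \<Longrightarrow>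
      A $$ (r, s) = c"
  defines "U \<equiv> mat n 3 (\<lambda>(r, k). (if r = q then [0, 0, 1] else [1, A $$ (r, q), 0]) ! k)"
    and "W \<equiv> mat 3 n (\<lambda>(k, r). (if r = q then [0, 1, c] else [c, 0, A $$ (r, q)]) ! k)"
    and "S \<equiv> \<Sum>r\<in>{..<n} - {q}. A $$ (r, q)"
    and "Q \<equiv> \<Sum>r\<in>{..<n} - {q}. (A $$ (r, q))\<^sup>2"
  shows "U * W = A + c \<cdot>\<^sub>m 1\<^sub>m n"
    and "W * U = mat 3 3 (\<lambda>(k, l). [[c * (real n - 1), c * S, 0], [0, 0, 1], [S, Q, c]] ! k ! l)"
      (is "_ = ?B")
proof -
  have sum3: "(\<Sum>k\<in>{0..<3}. f k) = f 0 + f 1 + f 2" for f :: "nat \<Rightarrow> real"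
    by (simp add: numeral_3_eq_3 numeral_2_eq_2)
  show "U * W = A + c \<cdot>\<^sub>m 1\<^sub>m n"
  proof (rule eq_matI)
    fix r s
    assume "r < dim_row (A + c \<cdot>\<^sub>m 1\<^sub>m n)" "s < dim_col (A + c \<cdot>\<^sub>m 1\<^sub>m n)"
    then show "(U * W) $$ (r, s) = (A + c \<cdot>\<^sub>m 1\<^sub>m n) $$ (r, s)"
      using A diag border const by (auto simp: U_def W_def scalar_prod_def sum3)
  qed (use A in \<open>simp_all add: U_def W_def\<close>)
  have split: "(\<Sum>r<n. f r) = f q + (\<Sum>r\<in>{..<n} - {q}. f r)" for f :: "nat \<Rightarrow> real"
    using q by (simp add: sum.remove)
  show "W * U = ?B"
  proof (rule eq_matI)
    fix k l
    assume "k < dim_row ?B" "l < dim_col ?B"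
    then have "k < 3" "l < 3"
      by auto
    then show "(W * U) $$ (k, l) = ?B $$ (k, l)"
      using q by (auto simp: U_def W_def scalar_prod_def split S_def Q_def atLeast0LessThan less_Suc_eq
          numeral_3_eq_3 numeral_2_eq_2 power2_eq_square sum_distrib_left)
  qed (simp_all add: U_def W_def)
qed

lemma char_poly_bordered:
  fixes A :: "real mat" and c :: real
  assumes A: "A \<in> carrier_mat n n" and q: "q < n" and n: "3 \<le> n"
    and diag: "\<And>r. r < n \<Longrightarrow> A $$ (r, r) = 0"
    and border: "\<And>r. r < n \<Longrightarrow> A $$ (q, r) = A $$ (r, q)"
    and const: "\<And>r s. r < n \<Longrightarrow> s < n \<Longrightarrow> r \<noteq> s \<Longrightarrow> r \<noteq> q \<Longrightarrow> s \<noteq> q \<Longrightarrow>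
      A $$ (r, s) = c"
  defines "S \<equiv> \<Sum>r\<in>{..<n} - {q}. A $$ (r, q)"
    and "Q \<equiv> \<Sum>r\<in>{..<n} - {q}. (A $$ (r, q))\<^sup>2"
  shows "char_poly A = [:c, 1:] ^ (n - 3) * ([:c * (2 - real n), 1:] * [:- Q, c, 1:] - [:c * S\<^sup>2:])"
proof (rule poly_eqI_except[where a = "- c"])
  fix x :: real
  assume "x \<noteq> - c"
  \<comment> \<open>Sylvester's identity needs t = x + c to be nonzero, hence the exceptional point.\<close>
  define t where "t = x + c"
  have t: "t \<noteq> 0"
    using \<open>x \<noteq> - c\<close> unfolding t_def by simp
  define U where "U = mat n 3 (\<lambda>(r, k). (if r = q then [0, 0, 1] else [1, A $$ (r, q), 0]) ! k)"
  define W where "W = mat 3 n (\<lambda>(k, r). (if r = q then [0, 1, c] else [c, 0, A $$ (r, q)]) ! k)"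
  have U: "U \<in> carrier_mat n 3" and W: "W \<in> carrier_mat 3 n"
    unfolding U_def W_def by auto
  have UW: "U * W = A + c \<cdot>\<^sub>m 1\<^sub>m n"
    unfolding U_def W_def using A q diag border const by (rule bordered_mat_factorization(1))
  have WU: "W * U = mat 3 3 (\<lambda>(k, l). [[c * (real n - 1), c * S, 0], [0, 0, 1], [S, Q, c]] ! k ! l)"
    unfolding U_def W_def S_def Q_def using A q diag border const by (rule bordered_mat_factorization(2))
  have "- char_matrix A x = t \<cdot>\<^sub>m 1\<^sub>m n - U * W"
    using A unfolding UW t_def char_matrix_def by auto
  then have char: "poly (char_poly A) x = det (t \<cdot>\<^sub>m 1\<^sub>m n - U * W)"
    using char_poly_matrix[OF A] by simp
  have "det (t \<cdot>\<^sub>m 1\<^sub>m 3 - W * U) = (t - c * (real n - 1)) * (t * (t - c) - Q) - c * S\<^sup>2"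
    unfolding WU by (subst det_3x3) (auto simp: algebra_simps power2_eq_square)
  moreover have "t ^ n = t ^ (n - 3) * t ^ 3"
    using n by (simp flip: power_add)
  ultimately have "det (t \<cdot>\<^sub>m 1\<^sub>m n - U * W) =
      t ^ (n - 3) * ((t - c * (real n - 1)) * (t * (t - c) - Q) - c * S\<^sup>2)"
    using det_sylvester[OF U W t] t by simp
  then show "poly (char_poly A) x =
      poly ([:c, 1:] ^ (n - 3) * ([:c * (2 - real n), 1:] * [:- Q, c, 1:] - [:c * S\<^sup>2:])) x"
    unfolding char t_def by (simp add: algebra_simps)
qed

section \<open>Walks and graph distance\<close>

lemma is_walk_singleton [simp]: "is_walk V E [x] \<longleftrightarrow> x \<in> V"
  unfolding is_walk_def by auto

lemma is_walk_Cons_Cons [simp]: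
  "is_walk V E (x # y # vs) \<longleftrightarrow> x \<in> V \<and> {x, y} \<in> E \<and> is_walk V E (y # vs)"
  unfolding is_walk_def by (auto simp: less_Suc_eq_0_disj)

lemma is_walk_nonempty: "is_walk V E vs \<Longrightarrow> vs \<noteq> []"
  unfolding is_walk_def by auto

lemma is_walk_subset: "is_walk V E vs \<Longrightarrow> set vs \<subseteq> V"
  unfolding is_walk_def by auto

lemma is_walk_hd_last_in:
  assumes "is_walk V E vs"
  shows "hd vs \<in> V" "last vs \<in> V"
  using is_walk_subset[OF assms] is_walk_nonempty[OF assms] by auto

lemma is_walk_nth_edge: "is_walk V E vs \<Longrightarrow> Suc k < length vs \<Longrightarrow> {vs ! k, vs ! Suc k} \<in> E"
  unfolding is_walk_def by auto

lemma is_walk_append: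
  "is_walk V E xs \<Longrightarrow> is_walk V E ys \<Longrightarrow> last xs = hd ys \<Longrightarrow> is_walk V E (xs @ tl ys)"
proof (induction xs rule: induct_list012)
  case (2 x)
  then show ?case by (cases ys) auto
qed (auto dest: is_walk_nonempty)

lemma hd_last_append_tl:
  assumes "xs \<noteq> []" "ys \<noteq> []" "last xs = hd ys"
  shows "hd (xs @ tl ys) = hd xs" "last (xs @ tl ys) = last ys"
  using assms by (auto simp: last_append) (cases ys; auto)+

lemma is_walk_rev: "is_walk V E vs \<Longrightarrow> is_walk V E (rev vs)"
proof (induction vs rule: induct_list012)
  case (3 x y zs)
  then have "is_walk V E (rev zs @ [y])" and "is_walk V E [y, x]"
    by (auto simp: insert_commute dest: is_walk_subset)
  then show ?case
    using is_walk_append[of V E "rev zs @ [y]" "[y, x]"] by simp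
qed auto

lemma is_walk_take: "is_walk V E vs \<Longrightarrow> 0 < k \<Longrightarrow> is_walk V E (take k vs)"
  unfolding is_walk_def by (auto dest: in_set_takeD)

lemma is_walk_drop: "is_walk V E vs \<Longrightarrow> k < length vs \<Longrightarrow> is_walk V E (drop k vs)"
  unfolding is_walk_def by (auto dest: in_set_dropD)

lemma is_walk_remove_cycles:
  assumes "is_walk V E vs"
  obtains ps where "is_walk V E ps" "distinct ps" "hd ps = hd vs" "last ps = last vs" "set ps \<subseteq> set vs"
  using assms
proof (induction "length vs" arbitrary: vs rule: less_induct)
  case less
  show ?case
  proof (cases "distinct vs")
    case False
    then obtain p q where pq: "p < q" "q < length vs" "vs ! p = vs ! q"
      by (auto simp: distinct_conv_nth) (metis linorder_neqE_nat)
    define xs where "xs = take (Suc p) vs"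
    define ys where "ys = drop q vs"
    have walks: "is_walk V E xs" "is_walk V E ys"
      unfolding xs_def ys_def using less.prems pq by (auto intro: is_walk_take is_walk_drop)
    then have nonempty: "xs \<noteq> []" "ys \<noteq> []"
      by (auto dest: is_walk_nonempty)
    have join: "last xs = hd ys"
      using pq nonempty unfolding xs_def ys_def by (simp add: last_conv_nth hd_drop_conv_nth)
    have "hd (xs @ tl ys) = hd vs" "last (xs @ tl ys) = last vs"
      using hd_last_append_tl[OF nonempty join] nonempty pq unfolding xs_def ys_def by auto
    moreover have "set (xs @ tl ys) \<subseteq> set vs"
    proof -
      have "set (tl ys) \<subseteq> set ys"
        by (cases ys) auto
      moreover have "set xs \<subseteq> set vs" "set ys \<subseteq> set vs"
        unfolding xs_def ys_def by (simp_all add: set_take_subset set_drop_subset)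
      ultimately show ?thesis
        by auto
    qed
    moreover have "length (xs @ tl ys) < length vs"
      unfolding xs_def ys_def using pq by simp
    ultimately show ?thesis
      using less.hyps[OF _ _ is_walk_append[OF walks join]] less.prems(1) by (metis order_trans)
  qed (use less in blast)
qed

lemma gdist_le_length: "is_walk V E vs \<Longrightarrow> gdist V E (hd vs) (last vs) \<le> length vs - 1"
  unfolding gdist_def by (rule Least_le) (auto intro!: exI[of _ vs] dest: is_walk_nonempty)

text \<open>No connectivity is needed: reversal identifies the predicates under the two LEAST,
  also when no walk exists.\<close>

lemma gdist_commute: "gdist V E u v = gdist V E v u"
proof -
  have "is_walk V E (rev vs) \<and> hd (rev vs) = v \<and> last (rev vs) = u \<and> length (rev vs) = Suc k"
    if "is_walk V E vs \<and> hd vs = u \<and> last vs = v \<and> length vs = Suc k" for vs k u v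
    using that is_walk_rev is_walk_nonempty by (fastforce simp: hd_rev last_rev)
  then have "(\<exists>vs. is_walk V E vs \<and> hd vs = u \<and> last vs = v \<and> length vs = Suc k) \<longleftrightarrow>
      (\<exists>vs. is_walk V E vs \<and> hd vs = v \<and> last vs = u \<and> length vs = Suc k)" for k
    by metis
  then show ?thesis
    unfolding gdist_def by simp
qed

lemma gdist_self [simp]: "u \<in> V \<Longrightarrow> gdist V E u u = 0"
  using gdist_le_length[of V E "[u]"] by simp

lemma gdist_edge_le: "{u, v} \<in> E \<Longrightarrow> u \<in> V \<Longrightarrow> v \<in> V \<Longrightarrow> gdist V E u v \<le> 1"
  using gdist_le_length[of V E "[u, v]"] by simp

lemma gdist_hd_nth_le:
  assumes "is_walk V E vs" "k < length vs"
  shows "gdist V E (hd vs) (vs ! k) \<le> k"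
proof -
  have "last (take (Suc k) vs) = vs ! k"
    using assms(2) by (simp add: take_Suc_conv_app_nth)
  then show ?thesis
    using gdist_le_length[OF is_walk_take[OF assms(1), of "Suc k"]] assms(2) by simp
qed

lemma gdist_nth_last_le:
  "is_walk V E vs \<Longrightarrow> k < length vs \<Longrightarrow> gdist V E (vs ! k) (last vs) \<le> length vs - 1 - k"
  using gdist_le_length[OF is_walk_drop[of V E vs k]] by (simp add: hd_drop_conv_nth)

lemma shortest_walk_exists:
  assumes "connected_graph V E" "u \<in> V" "v \<in> V"
  obtains vs where "is_walk V E vs" "hd vs = u" "last vs = v" "length vs = Suc (gdist V E u v)"
proof -
  obtain vs where "is_walk V E vs" "hd vs = u" "last vs = v"
    using assms unfolding connected_graph_def by blast
  then have "\<exists>k vs. is_walk V E vs \<and> hd vs = u \<and> last vs = v \<and> length vs = Suc k"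
    by (metis Suc_pred is_walk_nonempty length_greater_0_conv)
  then have "\<exists>vs. is_walk V E vs \<and> hd vs = u \<and> last vs = v \<and> length vs = Suc (gdist V E u v)"
    unfolding gdist_def by (rule LeastI_ex)
  then show ?thesis
    using that by blast
qed

lemma gdist_eq_0_iff:
  assumes "connected_graph V E" "u \<in> V" "v \<in> V"
  shows "gdist V E u v = 0 \<longleftrightarrow> u = v"
proof
  assume "gdist V E u v = 0"
  with shortest_walk_exists[OF assms] obtain vs where
    "hd vs = u" "last vs = v" "length vs = 1" by auto
  then show "u = v"
    by (cases vs) auto
qed (use assms in simp)

lemma gdist_triangle:
  assumes "connected_graph V E" "u \<in> V" "v \<in> V" "w \<in> V"
  shows "gdist V E u w \<le> gdist V E u v + gdist V E v w"
proof -
  obtain xs where xs: "is_walk V E xs" "hd xs = u" "last xs = v" "length xs = Suc (gdist V E u v)"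
    using shortest_walk_exists[OF assms(1-3)] .
  obtain ys where ys: "is_walk V E ys" "hd ys = v" "last ys = w" "length ys = Suc (gdist V E v w)"
    using shortest_walk_exists[OF assms(1,3,4)] .
  have nonempty: "xs \<noteq> []" "ys \<noteq> []"
    using xs ys by auto
  have "gdist V E u w \<le> length (xs @ tl ys) - 1"
    using gdist_le_length[OF is_walk_append[OF xs(1) ys(1)]] hd_last_append_tl[OF nonempty] xs ys
    by simp
  then show ?thesis
    using xs ys by simp
qed

section \<open>Distances in trees\<close>

locale tree =
  fixes V :: "'a set" and E :: "'a set set"
  assumes is_tree: "is_tree V E"
begin

lemma connected: "connected_graph V E"
  using is_tree unfolding is_tree_def by simp

lemma finite_vertices: "finite V"
  using is_tree unfolding is_tree_def simple_graph_def by simp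

lemma finite_edges: "finite E"
proof -
  have "E \<subseteq> Pow V"
    using is_tree unfolding is_tree_def simple_graph_def by auto
  then show ?thesis
    using finite_vertices by (simp add: finite_subset)
qed

lemma edge_vertices:
  assumes "{a, b} \<in> E"
  shows "a \<noteq> b" "a \<in> V" "b \<in> V"
proof -
  obtain u v where "u \<noteq> v" "u \<in> V" "v \<in> V" "{a, b} = {u, v}"
    using assms is_tree unfolding is_tree_def simple_graph_def by blast
  then show "a \<noteq> b" "a \<in> V" "b \<in> V"
    by (auto simp: doubleton_eq_iff)
qed

lemma no_walk_avoiding_common_neighbour:
  assumes "{y, u} \<in> E" "{y, u'} \<in> E" "u \<noteq> u'"
    and "is_walk V E W" "hd W = u" "last W = u'" "y \<notin> set W"
  shows False
proof -
  obtain ps where ps: "is_walk V E ps" "distinct ps" "hd ps = u" "last ps = u'" "set ps \<subseteq> set W"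
    using is_walk_remove_cycles[OF assms(4)] assms(5,6) by metis
  then obtain z zs where zs: "ps = z # zs" "zs \<noteq> []"
    using assms(3) by (cases ps) (auto dest: is_walk_nonempty split: if_split_asm)
  have "is_walk V E (y # ps)"
    using ps zs assms(1) edge_vertices(2)[OF assms(1)] by simp
  moreover have "length (y # ps) \<ge> 3" "distinct (y # ps)"
    using zs ps assms(7) by (auto simp: Suc_le_eq)
  moreover have "{last (y # ps), hd (y # ps)} \<in> E"
    using ps zs assms(2) by (simp add: insert_commute)
  ultimately show False
    using is_tree unfolding is_tree_def acyclic_graph_def by blast
qed

lemma shortest_walk_avoiding:
  assumes "x \<in> V" "u \<in> V" "y \<noteq> u" "gdist V E x u \<le> gdist V E x y"
  obtains P where "is_walk V E P" "hd P = x" "last P = u" "y \<notin> set P"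
proof -
  obtain P where P: "is_walk V E P" "hd P = x" "last P = u" "length P = Suc (gdist V E x u)"
    using shortest_walk_exists[OF connected assms(1,2)] .
  have "y \<notin> set P"
  proof
    assume "y \<in> set P"
    then obtain k where k: "k < length P" "P ! k = y"
      by (auto simp: in_set_conv_nth)
    then have "k = length P - 1"
      using gdist_hd_nth_le[OF P(1) k(1)] P assms(4) by simp
    then show False
      using k P assms(3) by (simp add: last_conv_nth is_walk_nonempty)
  qed
  with P that show ?thesis
    by blast
qed

text \<open>Two such neighbours would close a cycle through the shortest walks from x to them.\<close>

lemma lower_neighbour_unique:
  assumes "x \<in> V" "{y, u} \<in> E" "{y, u'} \<in> E"
    and "gdist V E x u \<le> gdist V E x y" "gdist V E x u' \<le> gdist V E x y"
  shows "u = u'"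
proof (rule ccontr)
  assume "u \<noteq> u'"
  note yu = edge_vertices[OF assms(2)] and yu' = edge_vertices[OF assms(3)]
  obtain P where P: "is_walk V E P" "hd P = x" "last P = u" "y \<notin> set P"
    using shortest_walk_avoiding[OF assms(1) yu(3,1) assms(4)] .
  obtain P' where P': "is_walk V E P'" "hd P' = x" "last P' = u'" "y \<notin> set P'"
    using shortest_walk_avoiding[OF assms(1) yu'(3,1) assms(5)] .
  have nonempty: "rev P \<noteq> []" "P' \<noteq> []"
    using P P' by (auto dest: is_walk_nonempty)
  have join: "last (rev P) = hd P'"
    using P P' nonempty by (simp add: last_rev)
  show False
  proof (rule no_walk_avoiding_common_neighbour[OF assms(2,3) \<open>u \<noteq> u'\<close>])
    show "is_walk V E (rev P @ tl P')"
      by (rule is_walk_append[OF is_walk_rev[OF P(1)] P'(1) join])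
    show "hd (rev P @ tl P') = u" "last (rev P @ tl P') = u'"
      using hd_last_append_tl[OF nonempty join] P P' nonempty by (auto simp: hd_rev)
    show "y \<notin> set (rev P @ tl P')"
      using P P' nonempty(2) by (auto dest: list.set_sel(2))
  qed
qed

lemma gdist_edge_cases:
  assumes "x \<in> V" "{a, b} \<in> E"
  shows "gdist V E x b = gdist V E x a + 1 \<or> gdist V E x a = gdist V E x b + 1"
proof -
  note ab = edge_vertices[OF assms(2)]
  have "gdist V E x a \<noteq> gdist V E x b"
  proof
    assume eq: "gdist V E x a = gdist V E x b"
    define m where "m = gdist V E x a"
    have "m \<noteq> 0"
      using eq ab gdist_eq_0_iff[OF connected assms(1)] unfolding m_def by auto
    obtain P where P: "is_walk V E P" "hd P = x" "last P = a" "length P = Suc m"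
      using shortest_walk_exists[OF connected assms(1) ab(2)] unfolding m_def .
    then have "P ! m = a"
      by (simp add: last_conv_nth is_walk_nonempty)
    then have "{a, P ! (m - 1)} \<in> E"
      using is_walk_nth_edge[OF P(1), of "m - 1"] P(4) \<open>m \<noteq> 0\<close> by (simp add: insert_commute)
    moreover have "gdist V E x (P ! (m - 1)) \<le> m - 1"
      using gdist_hd_nth_le[OF P(1), of "m - 1"] P by simp
    ultimately have "P ! (m - 1) = b"
      using lower_neighbour_unique[OF assms(1) _ assms(2)] eq unfolding m_def by fastforce
    then show False
      using \<open>gdist V E x (P ! (m - 1)) \<le> m - 1\<close> \<open>m \<noteq> 0\<close> eq unfolding m_def by simp
  qed
  moreover have "gdist V E x b \<le> gdist V E x a + 1" "gdist V E x a \<le> gdist V E x b + 1"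
    using gdist_triangle[OF connected assms(1) ab(2,3)] gdist_triangle[OF connected assms(1) ab(3,2)]
      gdist_edge_le[OF assms(2) ab(2,3)] gdist_commute[of V E a b] by auto
  ultimately show ?thesis
    by linarith
qed

lemma gdist_edge: "{a, b} \<in> E \<Longrightarrow> gdist V E a b = 1"
  using gdist_edge_cases[of a a b] edge_vertices[of a b] by auto

lemma even_gdist_walk:
  "x \<in> V \<Longrightarrow> is_walk V E vs \<Longrightarrow> even (length vs - 1 + gdist V E x (hd vs) + gdist V E x (last vs))"
proof (induction vs rule: induct_list012)
  case (3 z y zs)
  then show ?case
    using gdist_edge_cases[of x z y] by auto
qed (auto dest: is_walk_nonempty)

lemma even_gdist_triangle:
  assumes "u \<in> V" "v \<in> V" "w \<in> V"
  shows "even (gdist V E u v + gdist V E u w + gdist V E v w)"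
proof -
  obtain P where "is_walk V E P" "hd P = v" "last P = w" "length P = Suc (gdist V E v w)"
    using shortest_walk_exists[OF connected assms(2,3)] .
  then show ?thesis
    using even_gdist_walk[OF assms(1)] by fastforce
qed

lemma parent_exists:
  assumes "x \<in> V" "y \<in> V" "y \<noteq> x"
  obtains u where "{u, y} \<in> E" "gdist V E x u + 1 = gdist V E x y"
proof -
  define k where "k = gdist V E x y"
  obtain P where P: "is_walk V E P" "hd P = x" "last P = y" "length P = Suc k"
    using shortest_walk_exists[OF connected assms(1,2)] unfolding k_def .
  have "k \<noteq> 0"
    using gdist_eq_0_iff[OF connected assms(1,2)] assms(3) unfolding k_def by simp
  have "P ! k = y"
    using P by (simp add: last_conv_nth is_walk_nonempty)
  then have edge: "{P ! (k - 1), y} \<in> E"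
    using is_walk_nth_edge[OF P(1), of "k - 1"] P(4) \<open>k \<noteq> 0\<close> by simp
  moreover have "gdist V E x (P ! (k - 1)) \<le> k - 1"
    using gdist_hd_nth_le[OF P(1), of "k - 1"] P by simp
  ultimately have "gdist V E x (P ! (k - 1)) + 1 = gdist V E x y"
    using gdist_edge_cases[OF assms(1) edge] \<open>k \<noteq> 0\<close> unfolding k_def by auto
  with edge that show ?thesis
    by blast
qed

lemma edge_toward:
  assumes "x \<in> V" "{a, b} \<in> E"
  obtains u v where "{a, b} = {u, v}" "gdist V E x u + 1 = gdist V E x v"
proof (cases "gdist V E x b = gdist V E x a + 1")
  case True
  then show ?thesis
    using that[of a b] by simp
next
  case False
  then show ?thesis
    using that[of b a] gdist_edge_cases[OF assms] by (simp add: insert_commute)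
qed

text \<open>Rooted at any vertex, every edge joins a vertex to its parent, and this is a bijection
  between the non-root vertices and the edges.\<close>

lemma card_edges: "card E = card V - 1"
proof -
  obtain x where x: "x \<in> V"
    using is_tree unfolding is_tree_def by blast
  define parent where
    "parent y = (SOME u. {u, y} \<in> E \<and> gdist V E x u + 1 = gdist V E x y)" for y
  have parent: "{parent y, y} \<in> E \<and> gdist V E x (parent y) + 1 = gdist V E x y"
    if "y \<in> V - {x}" for y
    unfolding parent_def
    by (rule someI_ex) (use parent_exists[OF x, of y] that in blast)
  have "bij_betw (\<lambda>y. {parent y, y}) (V - {x}) E"
  proof (rule bij_betwI')
    fix y y'
    assume y: "y \<in> V - {x}" and y': "y' \<in> V - {x}"
    show "({parent y, y} = {parent y', y'}) = (y = y')"
    proof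
      assume "{parent y, y} = {parent y', y'}"
      then have "y = y' \<or> y = parent y' \<and> y' = parent y"
        by (auto simp: doubleton_eq_iff)
      then show "y = y'"
        using parent[OF y] parent[OF y'] by auto
    qed simp
  next
    fix e
    assume "e \<in> E"
    moreover obtain a b where "e = {a, b}"
      using \<open>e \<in> E\<close> is_tree unfolding is_tree_def simple_graph_def by blast
    ultimately have "{a, b} \<in> E"
      by simp
    then obtain a' b' where "{a, b} = {a', b'}" "gdist V E x a' + 1 = gdist V E x b'"
      by (rule edge_toward[OF x])
    then have e': "e = {a', b'}" "{b', a'} \<in> E" "gdist V E x a' + 1 = gdist V E x b'"
      using \<open>e = {a, b}\<close> \<open>e \<in> E\<close> by (simp_all add: insert_commute)
    then have b': "b' \<in> V - {x}"
      using edge_vertices[of b' a'] x by auto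
    have "{b', parent b'} \<in> E"
      using parent[OF b'] by (simp add: insert_commute)
    then have "a' = parent b'"
      by (rule lower_neighbour_unique[OF x e'(2)]) (use parent[OF b'] e'(3) in auto)
    then show "\<exists>y\<in>V - {x}. e = {parent y, y}"
      using e' b' by blast
  qed (use parent in blast)
  then have "card (V - {x}) = card E"
    by (rule bij_betw_same_card)
  then show ?thesis
    using x finite_vertices by simp
qed

lemma gdist_nth_shortest_walk:
  assumes "is_walk V E G" "hd G = i" "last G = j" "length G = Suc (gdist V E i j)" "k < length G"
  shows "gdist V E i (G ! k) = k" "gdist V E (G ! k) j = gdist V E i j - k"
proof -
  have "G ! k \<in> V"
    using assms(1,5) is_walk_subset nth_mem by blast
  then have "gdist V E i j \<le> gdist V E i (G ! k) + gdist V E (G ! k) j"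
    using gdist_triangle[OF connected] is_walk_hd_last_in[OF assms(1)] assms(2,3) by blast
  then show "gdist V E i (G ! k) = k" "gdist V E (G ! k) j = gdist V E i j - k"
    using gdist_hd_nth_le[OF assms(1,5)] gdist_nth_last_le[OF assms(1,5)] assms(2-5) by auto
qed

text \<open>Induction along the geodesic: the parent of such a vertex (towards i) lies on the geodesic
  as well, and two neighbours of one vertex of the walk that are both closer to j coincide.\<close>

lemma geodesic_vertex_on_shortest_walk:
  assumes G: "is_walk V E G" "hd G = i" "last G = j" "length G = Suc (gdist V E i j)"
    and "a \<in> V" "gdist V E i a + gdist V E a j = gdist V E i j"
  shows "a = G ! gdist V E i a"
  using assms(5,6)
proof (induction "gdist V E i a" arbitrary: a)
  case 0
  then have "a = i"
    using gdist_eq_0_iff[OF connected, of i a] is_walk_hd_last_in[OF G(1)] G(2) by simp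
  then show ?case
    using G(1,2) 0 by (simp add: hd_conv_nth is_walk_nonempty)
next
  case (Suc k)
  have ij: "i \<in> V" "j \<in> V"
    using is_walk_hd_last_in[OF G(1)] G(2,3) by simp_all
  have "a \<noteq> i"
    using Suc.hyps(2) ij by auto
  then obtain p where p: "{p, a} \<in> E" "gdist V E i p + 1 = gdist V E i a"
    using parent_exists[OF ij(1) Suc.prems(1)] by blast
  have pV: "p \<in> V"
    using edge_vertices(2)[OF p(1)] .
  have "gdist V E p j \<le> gdist V E p a + gdist V E a j"
    using gdist_triangle[OF connected pV Suc.prems(1) ij(2)] .
  moreover have "gdist V E i j \<le> gdist V E i p + gdist V E p j"
    using gdist_triangle[OF connected ij(1) pV ij(2)] .
  ultimately have "gdist V E i p + gdist V E p j = gdist V E i j"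
    using gdist_edge[OF p(1)] Suc.prems(2) p(2) by linarith
  moreover have "gdist V E i p = k"
    using p(2) Suc.hyps(2) by simp
  ultimately have "p = G ! k"
    using Suc.hyps(1)[of p] pV by simp
  have k: "Suc k < length G"
    using G(4) Suc.hyps(2) Suc.prems(2) by linarith
  then have "{G ! k, G ! Suc k} \<in> E"
    using is_walk_nth_edge[OF G(1)] by blast
  moreover have "{G ! k, a} \<in> E"
    using p(1) \<open>p = G ! k\<close> by (simp add: insert_commute)
  moreover have "gdist V E j a \<le> gdist V E j (G ! k)" "gdist V E j (G ! Suc k) \<le> gdist V E j (G ! k)"
    using gdist_nth_shortest_walk[OF G, of k] gdist_nth_shortest_walk[OF G k] k Suc.hyps(2) Suc.prems(2)
    by (auto simp: gdist_commute)
  ultimately have "a = G ! Suc k"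
    using lower_neighbour_unique[OF ij(2)] by blast
  then show ?case
    using Suc.hyps(2) by metis
qed

end

definition path_edges :: "'a set \<Rightarrow> 'a set set \<Rightarrow> 'a \<Rightarrow> 'a \<Rightarrow> 'a set set" where
  "path_edges V E i j =
    {e \<in> E. \<exists>a b. e = {a, b} \<and> gdist V E i a + 1 + gdist V E b j = gdist V E i j}"

lemma path_edges_subset: "path_edges V E i j \<subseteq> E"
  unfolding path_edges_def by blast

lemma path_edges_iff:
  "{a, b} \<in> path_edges V E i j \<longleftrightarrow> {a, b} \<in> E \<and>
    (gdist V E i a + 1 + gdist V E b j = gdist V E i j \<or> gdist V E i b + 1 + gdist V E a j = gdist V E i j)"
  unfolding path_edges_def by (auto simp: doubleton_eq_iff)

context tree
begin

lemma card_path_edges: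
  assumes i: "i \<in> V" and j: "j \<in> V"
  shows "card (path_edges V E i j) = gdist V E i j"
proof -
  obtain G where G: "is_walk V E G" "hd G = i" "last G = j" "length G = Suc (gdist V E i j)"
    using shortest_walk_exists[OF connected i j] .
  note pos = gdist_nth_shortest_walk[OF G]
  define step where "step k = {G ! k, G ! Suc k}" for k
  have "path_edges V E i j = step ` {..<gdist V E i j}"
  proof (intro equalityI subsetI)
    fix e
    assume "e \<in> step ` {..<gdist V E i j}"
    then obtain k where k: "k < gdist V E i j" "e = step k"
      by blast
    then have "gdist V E i (G ! k) + 1 + gdist V E (G ! Suc k) j = gdist V E i j"
      using pos[of k] pos[of "Suc k"] G(4) by simp
    moreover have "step k \<in> E"
      using is_walk_nth_edge[OF G(1), of k] G(4) k(1) unfolding step_def by simp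
    ultimately show "e \<in> path_edges V E i j"
      using k(2) unfolding path_edges_def step_def by blast
  next
    fix e
    assume "e \<in> path_edges V E i j"
    then obtain a b where e: "e = {a, b}" "{a, b} \<in> E"
      "gdist V E i a + 1 + gdist V E b j = gdist V E i j"
      unfolding path_edges_def by blast
    note ab = edge_vertices[OF e(2)]
    have "gdist V E a j \<le> gdist V E a b + gdist V E b j"
      "gdist V E i j \<le> gdist V E i a + gdist V E a j"
      "gdist V E i b \<le> gdist V E i a + gdist V E a b"
      "gdist V E i j \<le> gdist V E i b + gdist V E b j"
      using gdist_triangle[OF connected ab(2,3) j] gdist_triangle[OF connected i ab(2) j]
        gdist_triangle[OF connected i ab(2,3)] gdist_triangle[OF connected i ab(3) j] .
    then have "gdist V E i a + gdist V E a j = gdist V E i j"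
      "gdist V E i b + gdist V E b j = gdist V E i j" "gdist V E i b = Suc (gdist V E i a)"
      using gdist_edge[OF e(2)] e(3) by linarith+
    then have "a = G ! gdist V E i a" "b = G ! Suc (gdist V E i a)"
      using geodesic_vertex_on_shortest_walk[OF G] ab(2,3) by metis+
    moreover have "gdist V E i a < gdist V E i j"
      using e(3) by simp
    ultimately show "e \<in> step ` {..<gdist V E i j}"
      using e(1) unfolding step_def by auto
  qed
  moreover have "inj_on step {..<gdist V E i j}"
  proof (rule inj_onI)
    have image: "gdist V E i ` step m = {m, Suc m}" if "m < gdist V E i j" for m
      using pos[of m] pos[of "Suc m"] G(4) that unfolding step_def by simp
    fix k k'
    assume "k \<in> {..<gdist V E i j}" "k' \<in> {..<gdist V E i j}" "step k = step k'"
    then have "{k, Suc k} = {k', Suc k'}"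
      using image[of k] image[of k'] by simp
    then show "k = k'"
      by (auto simp: doubleton_eq_iff)
  qed
  ultimately show ?thesis
    by (simp add: card_image)
qed

end

section \<open>Entries of Min4PC\<close>

lemma min4pc_commute: "min4pc V E p q = min4pc V E q p"
  by (cases p; cases q) (simp add: min4pc_def gdist_commute min.commute min.left_commute add.commute)

lemma min4pc_swap: "min4pc V E (b, a) q = min4pc V E (a, b) q"
  by (cases q) (simp add: min4pc_def gdist_commute min.commute min.left_commute add.commute)

lemma min4pc_self: "a \<in> V \<Longrightarrow> b \<in> V \<Longrightarrow> min4pc V E (a, b) (a, b) = 0"
  by (simp add: min4pc_def)

abbreviation pair_set :: "'a \<times> 'a \<Rightarrow> 'a set" where
  "pair_set \<equiv> \<lambda>(a, b). {a, b}"

lemma min4pc_pair_set_cong_left: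
  assumes "pair_set p = pair_set p'"
  shows "min4pc V E p q = min4pc V E p' q"
proof -
  obtain a b where p: "p = (a, b)"
    by fastforce
  with assms have "p' = (a, b) \<or> p' = (b, a)"
    by (cases p') (auto simp: doubleton_eq_iff)
  with p show ?thesis
    using min4pc_swap by metis
qed

lemma min4pc_pair_set_cong:
  assumes "pair_set p = pair_set p'" "pair_set q = pair_set q'"
  shows "min4pc V E p q = min4pc V E p' q'"
  using min4pc_pair_set_cong_left[OF assms(1), of V E q] min4pc_pair_set_cong_left[OF assms(2), of V E p']
    min4pc_commute[of V E] by simp

context tree
begin

text \<open>The two crossing sums are positive and even, and the third sum is 1 + 1.\<close>

lemma min4pc_distinct_edges:
  assumes ab: "{a, b} \<in> E" and ab': "{a', b'} \<in> E" and "{a, b} \<noteq> {a', b'}"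
  shows "min4pc V E (a, b) (a', b') = 2"
proof -
  note v = edge_vertices[OF ab] edge_vertices[OF ab']
  have "gdist V E a b' + gdist V E b a' \<noteq> 0" "gdist V E a a' + gdist V E b b' \<noteq> 0"
    using \<open>{a, b} \<noteq> {a', b'}\<close> gdist_eq_0_iff[OF connected] v by (auto simp: insert_commute)
  moreover have "gdist V E a b' = gdist V E a a' + 1 \<or> gdist V E a a' = gdist V E a b' + 1"
    using gdist_edge_cases[OF v(2) ab'] .
  moreover have "gdist V E b a' = gdist V E a a' + 1 \<or> gdist V E a a' = gdist V E b a' + 1"
    using gdist_edge_cases[OF v(5) ab] gdist_commute[of V E a' a] gdist_commute[of V E a' b] by simp
  moreover have "gdist V E b b' = gdist V E a b' + 1 \<or> gdist V E a b' = gdist V E b b' + 1"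
    using gdist_edge_cases[OF v(6) ab] gdist_commute[of V E b' a] gdist_commute[of V E b' b] by simp
  ultimately have "2 \<le> gdist V E a b' + gdist V E b a'" "2 \<le> gdist V E a a' + gdist V E b b'"
    by (elim disjE; auto)+
  then show ?thesis
    unfolding min4pc_def using gdist_edge[OF ab] gdist_edge[OF ab'] by (simp add: min_def)
qed

text \<open>Each crossing sum is at least d - 1 and has the parity of d + 1, hence equals d - 1
  (exactly when the edge lies on the i-j path) or is at least d + 1.\<close>

lemma min4pc_edge_geodesic:
  assumes ab: "{a, b} \<in> E" and i: "i \<in> V" and j: "j \<in> V" and d: "1 < gdist V E i j"
  shows "min4pc V E (a, b) (i, j) =
    (if {a, b} \<in> path_edges V E i j then real (gdist V E i j) - 1 else real (gdist V E i j) + 1)"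
proof -
  note v = edge_vertices[OF ab]
  define D ia ib ja jb where "D = gdist V E i j"
    and "ia = gdist V E i a" and "ib = gdist V E i b" and "ja = gdist V E a j" and "jb = gdist V E b j"
  have edge: "ib = ia + 1 \<or> ia = ib + 1" "jb = ja + 1 \<or> ja = jb + 1"
    using gdist_edge_cases[OF i ab] gdist_edge_cases[OF j ab]
    unfolding ia_def ib_def ja_def jb_def by (simp_all add: gdist_commute[of V E j])
  have "D \<le> ia + ja" "even (ia + D + ja)"
    using gdist_triangle[OF connected i v(2) j] even_gdist_triangle[OF i v(2) j]
    unfolding D_def ia_def ja_def by simp_all
  moreover from this(2) edge have "ja + ib \<noteq> D \<and> ia + jb \<noteq> D"
    by (elim disjE) auto
  ultimately have "min (ja + ib) (min (ia + jb) (1 + D)) =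
    (if ia + 1 + jb = D \<or> ib + 1 + ja = D then D - 1 else D + 1)"
    using edge by (elim disjE) (auto simp: min_def)
  then show ?thesis
    unfolding min4pc_def path_edges_iff D_def ia_def ib_def ja_def jb_def
    using ab d gdist_edge[OF ab] by (simp add: gdist_commute[of V E _ i])
qed

end

section \<open>The principal submatrix on the edges and f\<close>

lemma enumerates_length: "enumerates ps B \<Longrightarrow> length ps = card B"
  unfolding enumerates_def using distinct_card[of "map pair_set ps"] by simp

lemma enumerates_nth_mem: "enumerates ps B \<Longrightarrow> r < length ps \<Longrightarrow> pair_set (ps ! r) \<in> B"
  unfolding enumerates_def using nth_mem[of r "map pair_set ps"] by simp

lemma enumerates_nth_inj:
  "enumerates ps B \<Longrightarrow> r < length ps \<Longrightarrow> s < length ps \<Longrightarrow>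
    pair_set (ps ! r) = pair_set (ps ! s) \<Longrightarrow> r = s"
  unfolding enumerates_def using nth_eq_iff_index_eq[of "map pair_set ps" r s] by simp

lemma enumerates_index_exists:
  assumes "enumerates ps B" "e \<in> B"
  obtains r where "r < length ps" "pair_set (ps ! r) = e"
proof -
  have "e \<in> set (map pair_set ps)"
    using assms unfolding enumerates_def by simp
  then obtain r where "r < length (map pair_set ps)" "map pair_set ps ! r = e"
    unfolding in_set_conv_nth by blast
  with that show ?thesis
    by simp
qed

lemma card_enumerates_indices:
  assumes "enumerates ps B" "C \<subseteq> B"
  shows "card {r. r < length ps \<and> pair_set (ps ! r) \<in> C} = card C"
proof -
  have "card {r. r < length ps \<and> pair_set (ps ! r) \<in> C} = length (filter (\<lambda>e. e \<in> C) (map pair_set ps))"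
    by (simp add: length_filter_conv_card cong: conj_cong)
  also have "\<dots> = card C"
    using assms distinct_length_filter[of "map pair_set ps" "\<lambda>e. e \<in> C"]
    unfolding enumerates_def by (simp add: Int_absorb2)
  finally show ?thesis .
qed

lemma sum_two_values:
  fixes f :: "'a \<Rightarrow> 'b :: comm_semiring_1"
  assumes "finite I" "P \<subseteq> I" "\<And>r. r \<in> P \<Longrightarrow> f r = a" "\<And>r. r \<in> I - P \<Longrightarrow> f r = b"
  shows "(\<Sum>r\<in>I. f r) = of_nat (card P) * a + of_nat (card I - card P) * b"
proof -
  have "(\<Sum>r\<in>I. f r) = (\<Sum>r\<in>P. f r) + (\<Sum>r\<in>I - P. f r)"
    using assms(1,2) by (simp add: sum.subset_diff add.commute)
  then show ?thesis
    using assms by (simp add: card_Diff_subset finite_subset)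
qed

context tree
begin

lemma enumeration_length:
  assumes enum: "enumerates ps (E \<union> {{i, j}})" and i: "i \<in> V" and j: "j \<in> V"
    and d: "1 < gdist V E i j"
  shows "length ps = card V" and "gdist V E i j < card V"
proof -
  have "{i, j} \<notin> E" "0 < card V"
    using gdist_edge[of i j] d i finite_vertices card_gt_0_iff by auto
  then show "length ps = card V"
    using enumerates_length[OF enum] card_edges finite_edges by simp
  show "gdist V E i j < card V"
    using card_mono[OF finite_edges path_edges_subset[of V E i j]] card_path_edges[OF i j]
      card_edges \<open>0 < card V\<close> by simp
qed

lemma min4pc_sub_entries:
  assumes enum: "enumerates ps (E \<union> {{i, j}})" and i: "i \<in> V" and j: "j \<in> V"
    and d: "1 < gdist V E i j" and q: "q < length ps" "pair_set (ps ! q) = {i, j}"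
  defines "M \<equiv> min4pc_sub V E ps"
  shows "r < length ps \<Longrightarrow> M $$ (r, r) = 0"
    and "r < length ps \<Longrightarrow> M $$ (q, r) = M $$ (r, q)"
    and "r < length ps \<Longrightarrow> s < length ps \<Longrightarrow> r \<noteq> s \<Longrightarrow> r \<noteq> q \<Longrightarrow> s \<noteq> q \<Longrightarrow>
      M $$ (r, s) = 2"
    and "r < length ps \<Longrightarrow> r \<noteq> q \<Longrightarrow> M $$ (r, q) =
      (if pair_set (ps ! r) \<in> path_edges V E i j then real (gdist V E i j) - 1 else real (gdist V E i j) + 1)"
proof -
  have entry: "M $$ (r, s) = min4pc V E (ps ! r) (ps ! s)" if "r < length ps" "s < length ps" for r s
    using that unfolding M_def min4pc_sub_def by simp
  have edge: "pair_set (ps ! r) \<in> E" if "r < length ps" "r \<noteq> q" for r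
    using enumerates_nth_mem[OF enum that(1)] enumerates_nth_inj[OF enum that(1) q(1)] q(2) that(2)
    by auto
  show "M $$ (r, r) = 0" if "r < length ps"
  proof -
    obtain a b where "ps ! r = (a, b)"
      by fastforce
    moreover have "{a, b} \<in> E \<union> {{i, j}}"
      using enumerates_nth_mem[OF enum that] \<open>ps ! r = (a, b)\<close> by simp
    then have "a \<in> V" "b \<in> V"
      using edge_vertices[of a b] i j by (auto simp: doubleton_eq_iff)
    ultimately show ?thesis
      using entry[OF that that] min4pc_self by simp
  qed
  show "M $$ (q, r) = M $$ (r, q)" if "r < length ps"
    using that q(1) by (simp add: entry min4pc_commute)
  show "M $$ (r, s) = 2" if "r < length ps" "s < length ps" "r \<noteq> s" "r \<noteq> q" "s \<noteq> q"
  proof -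
    obtain a b a' b' where "ps ! r = (a, b)" "ps ! s = (a', b')"
      by fastforce
    moreover have "{a, b} \<noteq> {a', b'}"
      using enumerates_nth_inj[OF enum that(1,2)] that(3) \<open>ps ! r = (a, b)\<close> \<open>ps ! s = (a', b')\<close>
      by auto
    ultimately show ?thesis
      using entry[OF that(1,2)] edge[OF that(1,4)] edge[OF that(2,5)] min4pc_distinct_edges by simp
  qed
  show "M $$ (r, q) = (if pair_set (ps ! r) \<in> path_edges V E i j
      then real (gdist V E i j) - 1 else real (gdist V E i j) + 1)" if "r < length ps" "r \<noteq> q"
  proof -
    obtain a b where "ps ! r = (a, b)"
      by fastforce
    moreover have "min4pc V E (ps ! r) (ps ! q) = min4pc V E (ps ! r) (i, j)"
      using q(2) by (intro min4pc_pair_set_cong) simp_all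
    ultimately show ?thesis
      using entry[OF that(1) q(1)] edge[OF that] min4pc_edge_geodesic[OF _ i j d] by simp
  qed
qed

lemma min4pc_sub_border_sum:
  fixes f :: "real \<Rightarrow> real"
  assumes enum: "enumerates ps (E \<union> {{i, j}})" and i: "i \<in> V" and j: "j \<in> V"
    and d: "1 < gdist V E i j" and q: "q < length ps" "pair_set (ps ! q) = {i, j}"
  shows "(\<Sum>r\<in>{..<length ps} - {q}. f (min4pc_sub V E ps $$ (r, q))) =
    real (gdist V E i j) * f (real (gdist V E i j) - 1) +
    real (length ps - 1 - gdist V E i j) * f (real (gdist V E i j) + 1)"
proof -
  define P where "P = {r. r < length ps \<and> pair_set (ps ! r) \<in> path_edges V E i j}"
  have "{i, j} \<notin> E"
    using gdist_edge[of i j] d by auto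
  then have q_off_path: "pair_set (ps ! q) \<notin> path_edges V E i j"
    using q(2) path_edges_subset[of V E i j] by auto
  then have "P \<subseteq> {..<length ps} - {q}"
    unfolding P_def by auto
  moreover have "card P = card (path_edges V E i j)"
    unfolding P_def by (rule card_enumerates_indices[OF enum]) (use path_edges_subset[of V E i j] in blast)
  then have "card P = gdist V E i j"
    using card_path_edges[OF i j] by simp
  moreover have "card ({..<length ps} - {q}) = length ps - 1"
    using q(1) by simp
  moreover have "(\<Sum>r\<in>{..<length ps} - {q}. f (min4pc_sub V E ps $$ (r, q))) =
      of_nat (card P) * f (real (gdist V E i j) - 1) +
      of_nat (card ({..<length ps} - {q}) - card P) * f (real (gdist V E i j) + 1)"
  proof (rule sum_two_values)
    fix r
    assume "r \<in> P"
    moreover from this have "r \<noteq> q"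
      using q_off_path unfolding P_def by blast
    ultimately show "f (min4pc_sub V E ps $$ (r, q)) = f (real (gdist V E i j) - 1)"
      using min4pc_sub_entries(4)[OF enum i j d q] unfolding P_def by simp
  next
    fix r
    assume "r \<in> {..<length ps} - {q} - P"
    then show "f (min4pc_sub V E ps $$ (r, q)) = f (real (gdist V E i j) + 1)"
      using min4pc_sub_entries(4)[OF enum i j d q] unfolding P_def by simp
  qed (use \<open>P \<subseteq> {..<length ps} - {q}\<close> in simp_all)
  ultimately show ?thesis
    by simp
qed

end

theorem theorem3p4:
  fixes V :: "'a set" and E :: "'a set set" and n :: nat and i j :: 'a and d :: nat
    and ps :: "('a \<times> 'a) list"
  assumes "is_tree V E"
    and "card V = n"
    and "i \<in> V" and "j \<in> V"
    and "gdist V E i j = d" and "d > 1"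
    and "enumerates ps (E \<union> {{i, j}})"
  shows "char_poly (min4pc_sub V E ps) =
    [:2, 1:] ^ (n - 3) *
    [: - 2 * (real d - 1)^2 * (real n - 1),
       - (real n * (real d)^2 - 5 * (real d)^2 + 2 * real n * real d - 2 * real d + 5 * real n - 9),
       - (2 * real n - 6),
       1 :]"
proof -
  interpret tree V E
    using assms(1) by unfold_locales
  have d: "1 < gdist V E i j"
    using assms(5,6) by simp
  note len = enumeration_length[OF assms(7,3,4) d, unfolded assms(2,5)]
  obtain q where q: "q < length ps" "pair_set (ps ! q) = {i, j}"
    using enumerates_index_exists[OF assms(7)] by blast
  have M: "min4pc_sub V E ps \<in> carrier_mat n n"
    unfolding min4pc_sub_def len(1) by simp
  note entries = min4pc_sub_entries[OF assms(7,3,4) d q, unfolded len(1)]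
  note sum = min4pc_sub_border_sum[OF assms(7,3,4) d q, unfolded len(1) assms(5)]
  have "char_poly (min4pc_sub V E ps) = [:2, 1:] ^ (n - 3) * ([:2 * (2 - real n), 1:] *
      [:- (\<Sum>r\<in>{..<n} - {q}. (min4pc_sub V E ps $$ (r, q))\<^sup>2), 2, 1:] -
      [:2 * (\<Sum>r\<in>{..<n} - {q}. min4pc_sub V E ps $$ (r, q))\<^sup>2:])"
    using len assms(6) q(1) by (intro char_poly_bordered[OF M] entries) auto
  also have "\<dots> = [:2, 1:] ^ (n - 3) *
    [: - 2 * (real d - 1)^2 * (real n - 1),
       - (real n * (real d)^2 - 5 * (real d)^2 + 2 * real n * real d - 2 * real d + 5 * real n - 9),
       - (2 * real n - 6),
       1 :]"
    unfolding sum[of "\<lambda>x. x"] sum[of "\<lambda>x. x\<^sup>2"] using len(2)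
    by (intro arg_cong[of _ _ "\<lambda>p. [:2, 1:] ^ (n - 3) * p"]) (simp add: algebra_simps power2_eq_square)
  finally show ?thesis .
qed

end
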